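(* Let $y_n$ denote the number of unlabelled rooted trees (Pólya trees) with $n$ vertices and $y(x)=\sum_{n\ge1}y_nx^n$. Then there is no formal power series $\phi(z)=\sum_{j\ge0}\phi_jz^j$ with non-negative coefficients $\phi_j\ge 0$ such that $y(x)=x\,\phi(y(x))$. In other words, Pólya trees are not simply generated.
   Context: A Pólya tree is an unlabelled rooted tree, i.e. rooted trees are counted up to root-preserving isomorphism. The generating function satisfies $y(x)=x\exp\left(\sum_{i\ge1}y(x^i)/i\right)$, and $y(x)=x+x^2+2x^3+4x^4+9x^5+\cdots$. A class of trees is called simply generated if its generating function $y(x)$ satisfies $y(x)=x\phi(y(x))$ for some power series $\phi$ with non-negative coefficients. *)

theory Defs
  imports "HOL-Library.Multiset" "HOL-Computational_Algebra.Formal_Power_Series"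
begin

text \<open>Two such values are equal exactly when the
corresponding rooted trees are isomorphic (root-preserving).\<close>
datatype rtree = Node "rtree multiset"

primrec nvert :: "rtree \<Rightarrow> nat" where
  "nvert (Node ts) = 1 + sum_mset (image_mset nvert ts)"

definition polya_count :: "nat \<Rightarrow> nat" where
  "polya_count n = card {t. nvert t = n}"

definition polya_gf :: "real fps" where
  "polya_gf = Abs_fps (\<lambda>n. real (polya_count n))"

end

theory Submission
  imports Defs
begin

unbundle fps_syntax

text \<open>Counting trees by their root-deleted forests gives
  y = x + x^2 + 2x^3 + 4x^4 + 9x^5 + 20x^6 + \<dots>.
  Comparing coefficients in y = x \<phi>(y) determines \<phi>_0, \<phi>_1, \<dots> one after another,
  since \<phi>_n enters the coefficient of x^{n+1} only through \<phi>_n y_1^n = \<phi>_n.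
  This forces \<phi>(z) = 1 + z + z^2 + 0 z^3 + 0 z^4 - z^5 + \<dots>, so \<phi>_5 < 0.\<close>

lemma nvert_ge_1: "nvert t \<ge> 1"
  by (cases t) auto

abbreviation forest_size :: "rtree multiset \<Rightarrow> nat" where
  "forest_size M \<equiv> sum_mset (image_mset nvert M)"

lemma forest_size_eq_0_iff: "forest_size M = 0 \<longleftrightarrow> M = {#}"
  using nvert_ge_1 by (cases M) (auto simp: Suc_le_eq)

text \<open>Forests with m vertices, enumerated executably (so that small counts can be
  computed by code_simp) by splitting off one tree with k + 1 vertices.\<close>
function forests :: "nat \<Rightarrow> rtree multiset set" where
  "forests 0 = {{#}}"
| "forests (Suc m) =
     (\<Union>k\<in>set [0..<Suc m]. (\<lambda>(t, M). add_mset t M) ` ((Node ` forests k) \<times> forests (m - k)))"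
  by pat_completeness auto
termination by (relation "measure id") auto

lemma forests_eq: "forests m = {M. forest_size M = m}"
proof (induction m rule: less_induct)
  case (less m)
  show ?case
  proof (cases m)
    case 0
    then show ?thesis using forest_size_eq_0_iff by auto
  next
    case (Suc n)
    have IH: "forests k = {M. forest_size M = k}" if "k \<le> n" for k
      using less Suc that by auto
    show ?thesis
    proof (intro set_eqI iffI)
      fix M assume "M \<in> forests m"
      then obtain k N M' where k: "k \<le> n" and "N \<in> forests k" "M' \<in> forests (n - k)"
        and M: "M = add_mset (Node N) M'"
        using Suc by (auto simp del: upt_Suc) (metis less_Suc_eq_le)
      then have "forest_size N = k" "forest_size M' = n - k"
        using IH[of k] IH[of "n - k"] by auto
      then show "M \<in> {M. forest_size M = m}"
        using M k Suc by simp
    next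
      fix M assume "M \<in> {M. forest_size M = m}"
      then have size_M: "forest_size M = Suc n" using Suc by simp
      then have "M \<noteq> {#}" by auto
      then obtain N M' where M: "M = add_mset (Node N) M'"
        by (metis multiset_cases rtree.exhaust)
      define k where "k = forest_size N"
      have size_split: "1 + k + forest_size M' = Suc n"
        using size_M M k_def by simp
      then have k: "k \<le> n" by simp
      have "N \<in> forests k" using IH[OF k] k_def by simp
      moreover have "M' \<in> forests (n - k)" using IH[of "n - k"] size_split by simp
      ultimately show "M \<in> forests m"
        using Suc M k by (auto intro!: bexI[of _ k] image_eqI[of _ _ "(Node N, M')"])
    qed
  qed
qed

lemma polya_count_0: "polya_count 0 = 0"
proof -
  have "{t. nvert t = 0} = {}"
    using nvert_ge_1 by (auto simp: Suc_le_eq)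
  then show ?thesis unfolding polya_count_def by (metis card.empty)
qed

lemma polya_count_Suc: "polya_count (Suc n) = card (forests n)"
proof -
  have "{t. nvert t = Suc n} = Node ` forests n"
  proof (rule set_eqI)
    fix t show "t \<in> {t. nvert t = Suc n} \<longleftrightarrow> t \<in> Node ` forests n"
      by (cases t) (auto simp: forests_eq)
  qed
  moreover have "inj Node" by (auto simp: inj_def)
  ultimately show ?thesis
    unfolding polya_count_def by (simp add: card_image inj_on_subset)
qed

lemma polya_count_upto_6: "map polya_count [0..<7] = [0, 1, 1, 2, 4, 9, 20]"
proof -
  have forest_counts: "map (card \<circ> forests) [0..<6] = [1, 1, 2, 4, 9, 20]"
    by code_simp
  have "[0..<7] = 0 # map Suc [0..<6]"
    by (simp only: upt_conv_Cons map_Suc_upt) simp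
  moreover have "polya_count \<circ> Suc = card \<circ> forests"
    by (simp add: fun_eq_iff polya_count_Suc)
  ultimately show ?thesis
    by (simp only: list.map map_map forest_counts polya_count_0)
qed

lemma polya_gf_coeffs_upto_6:
  "map (fps_nth polya_gf) [0..<7] = [0, 1, 1, 2, 4, 9, 20]"
proof -
  have "map (fps_nth polya_gf) [0..<7] = map (real \<circ> polya_count) [0..<7]"
    by (simp add: polya_gf_def del: upt_Suc)
  also have "\<dots> = map real [0, 1, 1, 2, 4, 9, 20]"
    by (simp only: list.map_comp[symmetric] polya_count_upto_6)
  finally show ?thesis by simp
qed

lemma fps_X_mult_compose_nth_Suc:
  "(fps_X * (\<phi> oo g)) $ Suc n = (\<Sum>i=0..n. \<phi> $ i * (g ^ i) $ n)"
  by (simp add: fps_compose_nth)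

lemma simply_generated_coeff_5:
  fixes \<phi> g :: "real fps"
  assumes g: "g = fps_X * (\<phi> oo g)"
    and coeffs: "map (fps_nth g) [0..<7] = [0, 1, 1, 2, 4, 9, 20]"
  shows "\<phi> $ 5 = -1"
proof -
  have rec: "g $ Suc n = (\<Sum>i=0..n. \<phi> $ i * (g ^ i) $ n)" for n
    by (subst g) (rule fps_X_mult_compose_nth_Suc)
  note expand = upt_rec fps_mult_nth numeral_eq_Suc power_Suc
  have \<phi>0: "\<phi> $ 0 = 1" using coeffs rec[of 0] by (simp add: expand)
  have \<phi>1: "\<phi> $ 1 = 1" using coeffs rec[of 1] \<phi>0 by (simp add: expand)
  have \<phi>2: "\<phi> $ 2 = 1" using coeffs rec[of 2] \<phi>0 \<phi>1 by (simp add: expand)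
  have \<phi>3: "\<phi> $ 3 = 0" using coeffs rec[of 3] \<phi>0 \<phi>1 \<phi>2 by (simp add: expand)
  have \<phi>4: "\<phi> $ 4 = 0" using coeffs rec[of 4] \<phi>0 \<phi>1 \<phi>2 \<phi>3 by (simp add: expand)
  show "\<phi> $ 5 = -1" using coeffs rec[of 5] \<phi>0 \<phi>1 \<phi>2 \<phi>3 \<phi>4 by (simp add: expand)
qed

theorem mainTheorem1:
  shows "\<not> (\<exists>\<phi> :: real fps. (\<forall>j. fps_nth \<phi> j \<ge> 0) \<and>
            polya_gf = fps_X * fps_compose \<phi> polya_gf)"
proof
  assume "\<exists>\<phi> :: real fps. (\<forall>j. fps_nth \<phi> j \<ge> 0) \<and>
            polya_gf = fps_X * fps_compose \<phi> polya_gf"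
  then obtain \<phi> :: "real fps" where nonneg: "\<forall>j. \<phi> $ j \<ge> 0"
    and simply_generated: "polya_gf = fps_X * (\<phi> oo polya_gf)"
    by blast
  have "\<phi> $ 5 = -1"
    using simply_generated polya_gf_coeffs_upto_6 by (rule simply_generated_coeff_5)
  with nonneg show False
    by (metis neg_0_le_iff_le not_one_le_zero)
qed

end
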